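(* Let $m,n,p,q\in\mathbb{R}$ with $m<0$, and let $P(t)=t^5+mt^3+nt^2+pt+q$. Set $u=\frac{2\sqrt{-m}}{\sqrt5}$, $\alpha=\frac{16n}{u^3}$, $\beta=\frac{16p}{u^4}-5$, $\gamma=\frac{16q}{u^5}$, and $f(\theta)=\alpha\cos^2\theta+\beta\cos\theta+\cos 5\theta+\gamma$. Let $N_{\mathrm{int}}$ be the number of zeros of $f$ in $[0,\pi]$ and $N_{\mathrm{ext}}$ the number of real roots of $P$ outside $[-u,u]$. Then all five roots of $P(t)=0$ are real if and only if $N_{\mathrm{int}}+N_{\mathrm{ext}}=5$. Moreover, if $f(0)\ge 0$, $f(\pi)\le 0$, and $f$ has five zeros in $[0,\pi]$, then all five roots of $P$ lie in $[-u,u]$, and they are $t_k=u\cos\theta_k$, $k=1,\dots,5$, where $0\le\theta_1<\cdots<\theta_5\le\pi$ are the five zeros of $f$.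
   Context: Roots of $P$ are its complex roots; $P$ has real coefficients, so nonreal roots occur in conjugate pairs. Note $f(0)=\alpha+\beta+1+\gamma$ and $f(\pi)=\alpha-\beta-1+\gamma$. *)

theory Defs
  imports "HOL-Analysis.Analysis" "HOL-Computational_Algebra.Polynomial"
begin

definition quinticP :: "real \<Rightarrow> real \<Rightarrow> real \<Rightarrow> real \<Rightarrow> real poly" where
  "quinticP m n p q = [:q, p, n, m, 0, 1:]"

definition uu :: "real \<Rightarrow> real" where
  "uu m = 2 * sqrt (- m) / sqrt 5"

definition alpha :: "real \<Rightarrow> real \<Rightarrow> real" where
  "alpha m n = 16 * n / (uu m) ^ 3"

definition beta :: "real \<Rightarrow> real \<Rightarrow> real" where
  "beta m p = 16 * p / (uu m) ^ 4 - 5"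

definition gamma' :: "real \<Rightarrow> real \<Rightarrow> real" where
  "gamma' m q = 16 * q / (uu m) ^ 5"

definition ftrig :: "real \<Rightarrow> real \<Rightarrow> real \<Rightarrow> real \<Rightarrow> real \<Rightarrow> real" where
  "ftrig m n p q \<theta> = alpha m n * (cos \<theta>)^2 + beta m p * cos \<theta> + cos (5 * \<theta>) + gamma' m q"

definition fzeros :: "real \<Rightarrow> real \<Rightarrow> real \<Rightarrow> real \<Rightarrow> real set" where
  "fzeros m n p q = {\<theta> \<in> {0..pi}. ftrig m n p q \<theta> = 0}"

definition N_int :: "real \<Rightarrow> real \<Rightarrow> real \<Rightarrow> real \<Rightarrow> nat" where
  "N_int m n p q = (\<Sum>\<theta>\<in>fzeros m n p q. order (uu m * cos \<theta>) (quinticP m n p q))"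

definition N_ext :: "real \<Rightarrow> real \<Rightarrow> real \<Rightarrow> real \<Rightarrow> nat" where
  "N_ext m n p q = (\<Sum>t\<in>{t. poly (quinticP m n p q) t = 0 \<and> \<bar>t\<bar> > uu m}. order t (quinticP m n p q))"

end

theory Submission
  imports Defs "HOL-Computational_Algebra.Fundamental_Theorem_Algebra"
begin

text \<open>The substitution \<open>t = u cos \<theta>\<close> turns \<open>P\<close> into \<open>u\<^sup>5/16 \<cdot> f(\<theta>)\<close>: the choice of \<open>u\<close> makes
  \<open>m = -5u\<^sup>2/4\<close>, so the terms \<open>t\<^sup>5 + m t\<^sup>3\<close> together with the \<open>-5\<close> in \<open>\<beta>\<close> become
  \<open>u\<^sup>5/16 (16 cos\<^sup>5\<theta> - 20 cos\<^sup>3\<theta> + 5 cos \<theta>) = u\<^sup>5/16 cos 5\<theta>\<close>.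
  Hence \<open>\<theta> \<mapsto> u cos \<theta>\<close> maps the zeros of \<open>f\<close> in \<open>[0, \<pi>]\<close> bijectively onto the real roots of
  \<open>P\<close> in \<open>[-u, u]\<close>, and \<open>N\<^sub>i\<^sub>n\<^sub>t + N\<^sub>e\<^sub>x\<^sub>t\<close> is the number of real roots of \<open>P\<close> counted with
  multiplicity; it equals \<open>5 = deg P\<close> exactly when no root is non-real.
  If \<open>f\<close> has five distinct zeros, the monic quintic \<open>P\<close> has the five distinct roots \<open>u cos \<theta>\<^sub>k\<close>
  and is therefore their product.\<close>

lemma cos_quintuple_cos: "cos (5 * x) = 16 * cos x ^ 5 - 20 * cos x ^ 3 + 5 * cos (x::real)"
proof -
  have "cos (5 * x) = cos (x + x + x + x + x)" by simp
  also have "\<dots> = 16 * cos x ^ 5 - 20 * cos x ^ 3 + 5 * cos x"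
    unfolding cos_add sin_add using sin_squared_eq[of x] by algebra
  finally show ?thesis .
qed

lemma poly_map_poly_of_real:
  "poly (map_poly of_real p) (of_real x) = (of_real (poly p x) :: 'a::real_field)"
  by (induction p) (auto simp: map_poly_pCons)

lemma map_poly_of_real_mult:
  "map_poly (of_real :: real \<Rightarrow> 'a::real_field) (p * q) = map_poly of_real p * map_poly of_real q"
  by (rule poly_eqI) (simp add: coeff_mult coeff_map_poly)

lemma map_poly_of_real_prod:
  "map_poly (of_real :: real \<Rightarrow> 'a::real_field) (\<Prod>x\<in>A. f x) = (\<Prod>x\<in>A. map_poly of_real (f x))"
  by (induction A rule: infinite_finite_induct) (simp_all add: map_poly_of_real_mult)

lemma map_poly_of_real_power:
  "map_poly (of_real :: real \<Rightarrow> 'a::real_field) (p ^ k) = map_poly of_real p ^ k"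
  by (induction k) (simp_all add: map_poly_of_real_mult)

lemma map_poly_of_real_linear_factor:
  "map_poly (of_real :: real \<Rightarrow> 'a::real_field) [:- t, 1:] = [:- of_real t, 1:]"
  by (simp add: map_poly_pCons)

lemma order_map_poly_of_real:
  fixes p :: "real poly"
  assumes "p \<noteq> 0"
  shows "order (of_real t :: 'a::real_field) (map_poly of_real p) = order t p"
proof -
  obtain q where q: "p = [:- t, 1:] ^ order t p * q" "\<not> [:- t, 1:] dvd q"
    using order_decomp[OF assms] by blast
  have "q \<noteq> 0" and "poly q t \<noteq> 0"
    using q assms poly_eq_0_iff_dvd by auto
  have "map_poly (of_real :: real \<Rightarrow> 'a) p = [:- of_real t, 1:] ^ order t p * map_poly of_real q"
    by (subst q(1)) (simp add: map_poly_of_real_mult map_poly_of_real_power map_poly_of_real_linear_factor)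
  then show ?thesis
    by (simp, subst order_mult) (use \<open>q \<noteq> 0\<close> \<open>poly q t \<noteq> 0\<close> in
        \<open>auto simp: map_poly_eq_0_iff order_power_n_n poly_map_poly_of_real intro!: order_0I\<close>)
qed

lemma complex_poly_degree_eq_sum_order:
  fixes p :: "complex poly"
  assumes "p \<noteq> 0"
  shows "degree p = (\<Sum>z | poly p z = 0. order z p)"
proof -
  have "degree (smult (lead_coeff p) (\<Prod>z | poly p z = 0. [:-z, 1:] ^ order z p))
          = (\<Sum>z | poly p z = 0. order z p)"
    using assms by (subst degree_smult_eq) (auto simp: degree_prod_sum_eq degree_linear_power)
  then show ?thesis
    by (simp only: complex_poly_decompose)
qed

lemma real_poly_all_roots_real_iff:
  fixes p :: "real poly"
  assumes "p \<noteq> 0"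
  shows "(\<forall>z::complex. poly (map_poly of_real p) z = 0 \<longrightarrow> z \<in> \<real>)
           \<longleftrightarrow> (\<Sum>t | poly p t = 0. order t p) = degree p"
proof -
  define pc where "pc = (map_poly of_real p :: complex poly)"
  define R where "R = {t. poly p t = 0}"
  define NR where "NR = {z. poly pc z = 0 \<and> z \<notin> \<real>}"
  have pc: "pc \<noteq> 0"
    using assms by (simp add: pc_def map_poly_eq_0_iff)
  have roots_split: "{z. poly pc z = 0} = of_real ` R \<union> NR"
    by (auto simp: pc_def NR_def R_def poly_map_poly_of_real elim!: Reals_cases)
  have fin: "finite {z. poly pc z = 0}"
    using poly_roots_finite[OF pc] .
  have "degree p = (\<Sum>z | poly pc z = 0. order z pc)"
    using complex_poly_degree_eq_sum_order[OF pc] by (simp add: pc_def degree_map_poly)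
  also have "\<dots> = (\<Sum>z\<in>of_real ` R. order z pc) + (\<Sum>z\<in>NR. order z pc)"
    unfolding roots_split by (rule sum.union_disjoint) (use fin roots_split in \<open>auto simp: NR_def\<close>)
  also have "(\<Sum>z\<in>of_real ` R. order z pc) = (\<Sum>t\<in>R. order t p)"
    by (subst sum.reindex) (auto simp: inj_on_def pc_def order_map_poly_of_real[OF assms])
  finally have degree_split: "degree p = (\<Sum>t\<in>R. order t p) + (\<Sum>z\<in>NR. order z pc)" .
  have "finite NR"
    using fin roots_split by auto
  then have "(\<Sum>z\<in>NR. order z pc) = 0 \<longleftrightarrow> NR = {}"
    using pc by (auto simp: NR_def order_root)
  with degree_split show ?thesis
    by (auto simp: NR_def pc_def R_def)
qed

lemma monic_poly_eq_prod_roots: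
  fixes p :: "'a::idom poly"
  assumes "finite A" "card A = degree p" "lead_coeff p = 1" "\<And>a. a \<in> A \<Longrightarrow> poly p a = 0"
  shows "p = (\<Prod>a\<in>A. [:-a, 1:])"
proof (rule poly_eqI_degree_lead_coeff[of p "degree p" _ A])
  have degree_prod: "degree (\<Prod>a\<in>A. [:-a, 1:]) = degree p"
    using assms(1,2) by (simp add: degree_prod_sum_eq)
  then show "degree (\<Prod>a\<in>A. [:-a, 1:]) \<le> degree p"
    by simp
  show "coeff p (degree p) = coeff (\<Prod>a\<in>A. [:-a, 1:]) (degree p)"
    using assms(3) lead_coeff_prod[of "\<lambda>a. [:-a, 1:]" A] degree_prod by simp
  show "poly p a = poly (\<Prod>a\<in>A. [:-a, 1:]) a" if "a \<in> A" for a
    using assms(1,4) that by (simp add: poly_prod)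
qed (use assms in auto)

lemma bij_betw_scaled_cos:
  fixes u :: real
  assumes "u > 0"
  shows "bij_betw (\<lambda>\<theta>. u * cos \<theta>) {\<theta>\<in>{0..pi}. Q (u * cos \<theta>)} {t. Q t \<and> \<bar>t\<bar> \<le> u}"
proof (rule bij_betw_imageI)
  show "inj_on (\<lambda>\<theta>. u * cos \<theta>) {\<theta>\<in>{0..pi}. Q (u * cos \<theta>)}"
    using assms by (auto simp: inj_on_def intro: cos_inj_pi)
  show "(\<lambda>\<theta>. u * cos \<theta>) ` {\<theta>\<in>{0..pi}. Q (u * cos \<theta>)} = {t. Q t \<and> \<bar>t\<bar> \<le> u}"
  proof (intro equalityI subsetI)
    fix t assume t: "t \<in> {t. Q t \<and> \<bar>t\<bar> \<le> u}"
    then have "-1 \<le> t / u" "t / u \<le> 1"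
      using assms by (auto simp: divide_simps abs_le_iff)
    then have "arccos (t / u) \<in> {0..pi}" "u * cos (arccos (t / u)) = t"
      using assms by (auto simp: arccos_lbound arccos_ubound)
    with t show "t \<in> (\<lambda>\<theta>. u * cos \<theta>) ` {\<theta>\<in>{0..pi}. Q (u * cos \<theta>)}"
      by (metis (mono_tags, lifting) image_eqI mem_Collect_eq)
  qed (use assms in \<open>auto simp: abs_mult intro!: mult_left_le\<close>)
qed

lemma poly_map_poly_of_real_prod_linear_eq_0_iff:
  assumes "finite A"
  shows "poly (map_poly of_real (\<Prod>t\<in>A. [:-t, 1:])) z = 0 \<longleftrightarrow> z \<in> (of_real ` A :: 'a::real_field set)"
  using assms by (auto simp: map_poly_of_real_prod map_poly_of_real_linear_factor poly_prod)

lemma uu_pos: "m < 0 \<Longrightarrow> uu m > 0"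
  by (simp add: uu_def)

lemma m_eq_uu: "m < 0 \<Longrightarrow> m = - 5 / 4 * uu m ^ 2"
  by (simp add: uu_def power_divide power_mult_distrib)

lemma quinticP_nonzero: "quinticP m n p q \<noteq> 0"
  by (simp add: quinticP_def)

lemma degree_quinticP: "degree (quinticP m n p q) = 5"
  by (simp add: quinticP_def)

lemma lead_coeff_quinticP: "lead_coeff (quinticP m n p q) = 1"
  by (simp add: quinticP_def)

lemma poly_quinticP_scaled_cos:
  assumes "m < 0"
  shows "poly (quinticP m n p q) (uu m * cos \<theta>) = uu m ^ 5 / 16 * ftrig m n p q \<theta>"
proof -
  define u where "u = uu m"
  define c where "c = cos \<theta>"
  have "u > 0" and m: "m = - 5 / 4 * u ^ 2"
    using uu_pos[OF assms] m_eq_uu[OF assms] by (simp_all add: u_def)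
  have "poly (quinticP m n p q) (u * c)
      = u ^ 5 / 16 * (16 * n / u ^ 3 * c ^ 2 + (16 * p / u ^ 4 - 5) * c
                      + (16 * c ^ 5 - 20 * c ^ 3 + 5 * c) + 16 * q / u ^ 5)"
    using \<open>u > 0\<close> unfolding m
    by (simp add: quinticP_def field_simps)
       (simp add: algebra_simps power2_eq_square power3_eq_cube numeral_eq_Suc)
  then show ?thesis
    unfolding ftrig_def alpha_def beta_def gamma'_def cos_quintuple_cos u_def c_def by simp
qed

lemma bij_betw_fzeros_roots_in_interval:
  assumes "m < 0"
  shows "bij_betw (\<lambda>\<theta>. uu m * cos \<theta>) (fzeros m n p q)
           {t. poly (quinticP m n p q) t = 0 \<and> \<bar>t\<bar> \<le> uu m}"
proof -
  have "fzeros m n p q = {\<theta>\<in>{0..pi}. poly (quinticP m n p q) (uu m * cos \<theta>) = 0}"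
    using uu_pos[OF assms] by (simp add: fzeros_def poly_quinticP_scaled_cos[OF assms])
  then show ?thesis
    using bij_betw_scaled_cos[OF uu_pos[OF assms]] by simp
qed

lemma N_int_plus_N_ext:
  assumes "m < 0"
  shows "N_int m n p q + N_ext m n p q
           = (\<Sum>t | poly (quinticP m n p q) t = 0. order t (quinticP m n p q))"
proof -
  define P where "P = quinticP m n p q"
  have roots_finite: "finite {t. poly P t = 0}"
    using poly_roots_finite[OF quinticP_nonzero] by (simp add: P_def)
  have roots_split:
    "{t. poly P t = 0} = {t. poly P t = 0 \<and> \<bar>t\<bar> \<le> uu m} \<union> {t. poly P t = 0 \<and> \<bar>t\<bar> > uu m}"
    by auto
  have "N_int m n p q = (\<Sum>t | poly P t = 0 \<and> \<bar>t\<bar> \<le> uu m. order t P)"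
    unfolding N_int_def P_def
    by (rule sum.reindex_bij_betw[OF bij_betw_fzeros_roots_in_interval[OF assms]])
  also have "\<dots> + N_ext m n p q = (\<Sum>t | poly P t = 0. order t P)"
    unfolding N_ext_def P_def[symmetric]
    by (subst roots_split, rule sum.union_disjoint[symmetric]) (use roots_finite in auto)
  finally show ?thesis
    by (simp add: P_def)
qed

lemma quinticP_eq_prod_roots_in_interval:
  assumes "m < 0" "card (fzeros m n p q) = 5"
  shows "quinticP m n p q = (\<Prod>t | poly (quinticP m n p q) t = 0 \<and> \<bar>t\<bar> \<le> uu m. [:-t, 1:])"
proof (rule monic_poly_eq_prod_roots)
  show "card {t. poly (quinticP m n p q) t = 0 \<and> \<bar>t\<bar> \<le> uu m} = degree (quinticP m n p q)"
    using bij_betw_same_card[OF bij_betw_fzeros_roots_in_interval[OF assms(1)]] assms(2)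
    by (simp add: degree_quinticP)
  show "finite {t. poly (quinticP m n p q) t = 0 \<and> \<bar>t\<bar> \<le> uu m}"
    using poly_roots_finite[OF quinticP_nonzero] by (rule rev_finite_subset) auto
qed (simp_all add: lead_coeff_quinticP)

lemma quinticP_roots_in_interval:
  assumes "m < 0" "card (fzeros m n p q) = 5"
    and "poly (map_poly of_real (quinticP m n p q)) z = 0"
  shows "z \<in> \<real> \<and> - uu m \<le> Re z \<and> Re z \<le> uu m"
proof -
  define R where "R = {t. poly (quinticP m n p q) t = 0 \<and> \<bar>t\<bar> \<le> uu m}"
  \<comment> \<open>\<open>R\<close> must stay folded: with \<open>R_def\<close> unfolded, rewriting by \<open>P_eq\<close> would loop.\<close>
  have P_eq: "quinticP m n p q = (\<Prod>t\<in>R. [:-t, 1:])"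
    unfolding R_def by (rule quinticP_eq_prod_roots_in_interval[OF assms(1,2)])
  have "finite R"
    using poly_roots_finite[OF quinticP_nonzero] by (rule rev_finite_subset) (auto simp: R_def)
  moreover have "poly (map_poly of_real (\<Prod>t\<in>R. [:-t, 1:])) z = 0"
    using assms(3) by (simp only: P_eq)
  ultimately have "z \<in> of_real ` R"
    by (simp add: poly_map_poly_of_real_prod_linear_eq_0_iff)
  then show ?thesis
    by (auto simp: R_def abs_le_iff)
qed

lemma quinticP_eq_prod_cos_fzeros:
  assumes "m < 0" "card (fzeros m n p q) = 5" "inj_on \<theta> K" "\<theta> ` K = fzeros m n p q"
  shows "quinticP m n p q = (\<Prod>k\<in>K. [:- (uu m * cos (\<theta> k)), 1:])"
proof -
  define R where "R = {t. poly (quinticP m n p q) t = 0 \<and> \<bar>t\<bar> \<le> uu m}"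
  have P_eq: "quinticP m n p q = (\<Prod>t\<in>R. [:-t, 1:])"
    unfolding R_def by (rule quinticP_eq_prod_roots_in_interval[OF assms(1,2)])
  have "bij_betw \<theta> K (fzeros m n p q)"
    using assms(3,4) by (rule bij_betw_imageI)
  then have "bij_betw ((\<lambda>\<theta>. uu m * cos \<theta>) \<circ> \<theta>) K R"
    unfolding R_def using bij_betw_fzeros_roots_in_interval[OF assms(1)] by (rule bij_betw_trans)
  then show ?thesis
    unfolding P_eq by (subst prod.reindex_bij_betw[symmetric]) (simp_all add: comp_def)
qed

theorem theorem1:
  fixes m n p q :: real
  assumes "m < 0"
  shows "((\<forall>z::complex. poly (map_poly complex_of_real (quinticP m n p q)) z = 0 \<longrightarrow> z \<in> \<real>)
           \<longleftrightarrow> N_int m n p q + N_ext m n p q = 5)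
       \<and> (ftrig m n p q 0 \<ge> 0 \<and> ftrig m n p q pi \<le> 0 \<and> card (fzeros m n p q) = 5 \<longrightarrow>
            (\<forall>z::complex. poly (map_poly complex_of_real (quinticP m n p q)) z = 0 \<longrightarrow>
                z \<in> \<real> \<and> - uu m \<le> Re z \<and> Re z \<le> uu m)
          \<and> (\<forall>\<theta>::nat \<Rightarrow> real. strict_mono_on {1..5} \<theta> \<and> \<theta> ` {1..5} = fzeros m n p q \<longrightarrow>
                quinticP m n p q = (\<Prod>k=1..5. [:- (uu m * cos (\<theta> k)), 1:])))"
proof -
  have "(\<forall>z::complex. poly (map_poly complex_of_real (quinticP m n p q)) z = 0 \<longrightarrow> z \<in> \<real>)
          \<longleftrightarrow> N_int m n p q + N_ext m n p q = 5"
    using real_poly_all_roots_real_iff[OF quinticP_nonzero]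
    by (simp add: N_int_plus_N_ext[OF assms] degree_quinticP)
  moreover have "\<forall>z::complex. poly (map_poly complex_of_real (quinticP m n p q)) z = 0 \<longrightarrow>
                   z \<in> \<real> \<and> - uu m \<le> Re z \<and> Re z \<le> uu m"
    if "card (fzeros m n p q) = 5"
    using quinticP_roots_in_interval[OF assms that] by blast
  moreover have "\<forall>\<theta>::nat \<Rightarrow> real. strict_mono_on {1..5} \<theta> \<and> \<theta> ` {1..5} = fzeros m n p q \<longrightarrow>
                   quinticP m n p q = (\<Prod>k=1..5. [:- (uu m * cos (\<theta> k)), 1:])"
    if "card (fzeros m n p q) = 5"
    using quinticP_eq_prod_cos_fzeros[OF assms that] strict_mono_on_imp_inj_on by blast
  ultimately show ?thesis
    by blast
qed

end
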